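(* Let $n\ge 1$ and let $D$ be a diagram of $[n]^2$. Then the vertex set of the Schubitope $\mathcal{S}_D$ is \[\{x(w)\colon w\in S_n\},\] where, for $w\in S_n$, $x(w)=(x_1,\ldots,x_n)$ is the vector such that $x_k$ ($1\le k\le n$) is the number of appearances of the integer $k$ in the filling $\mathcal{F}_w(D)$.
   Context: $[n]=\{1,\ldots,n\}$. A diagram $D$ of $[n]^2$ is a set of boxes $(i,j)$ (row $i$, column $j$, rows numbered $1,\dots,n$ top to bottom, columns $1,\dots,n$ left to right) of the $n\times n$ grid. For $1\le j\le n$ and $S\subseteq[n]$, let $\mathrm{word}_{j,S}(D)$ be the string obtained by reading column $j$ from top to bottom and recording, for row $i$: "(" if $(i,j)\notin D$ and $i\in S$; ")" if $(i,j)\in D$ and $i\notin S$; "$\star$" if $(i,j)\in D$ and $i\in S$ (nothing otherwise). Let $\theta_D^j(S)$ be the number of matched pairs "()" in this string (standard parenthesis matching, ignoring $\star$'s) plus the number of $\star$'s, and $\theta_D(S)=\sum_{j=1}^n\theta_D^j(S)$. The Schubitope is $\mathcal{S}_D=\{x\in\mathbb{R}^n\colon \sum_{i\in[n]}x_i=\#D,\ \sum_{i\in S}x_i\le\theta_D(S)\text{ for all }S\subsetneq[n]\}$. For $w=w_1\cdots w_n\in S_n$, the filling $\mathcal{F}_w(D)$ is defined column by column: for each column $D_j=\{i\colon (i,j)\in D\}$, for $k=1,2,\ldots,n$ in turn, place $w_k$ into the topmost box of column $j$ of $D$ that is still empty and whose row index is $\ge w_k$; if no such box exists, $w_k$ is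 skipped for this column. Boxes may remain empty. *)

theory Defs
  imports "HOL-Analysis.Analysis" "HOL-Combinatorics.Permutations"
begin

(* Rows and columns are indexed by a finite linearly ordered type 'n,
   standing for [n] = {1,...,n} with its usual order (n = CARD('n) >= 1).
   Row order "top to bottom" = increasing order of 'n. *)

datatype psym = POpen | PClose | PStar

definition sym_of :: "('n::linorder \<times> 'n) set \<Rightarrow> 'n \<Rightarrow> 'n set \<Rightarrow> 'n \<Rightarrow> psym list" where
  "sym_of D j S i =
     (if (i,j) \<notin> D \<and> i \<in> S then [POpen]
      else if (i,j) \<in> D \<and> i \<notin> S then [PClose]
      else if (i,j) \<in> D \<and> i \<in> S then [PStar]
      else [])"

definition word_col :: "('n::{finite,linorder} \<times> 'n) set \<Rightarrow> 'n \<Rightarrow> 'n set \<Rightarrow> psym list" where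
  "word_col D j S = concat (map (sym_of D j S) (sorted_list_of_set (UNIV :: 'n set)))"

(* number of matched pairs "()" (standard parenthesis matching, stars ignored);
   the first argument is the number of currently unmatched "(" *)
fun matched :: "nat \<Rightarrow> psym list \<Rightarrow> nat" where
  "matched k [] = 0"
| "matched k (POpen # xs) = matched (Suc k) xs"
| "matched k (PClose # xs) = (if 0 < k then Suc (matched (k - 1) xs) else matched k xs)"
| "matched k (PStar # xs) = matched k xs"

definition theta_col :: "('n::{finite,linorder} \<times> 'n) set \<Rightarrow> 'n \<Rightarrow> 'n set \<Rightarrow> nat" where
  "theta_col D j S = matched 0 (word_col D j S) + length (filter (\<lambda>c. c = PStar) (word_col D j S))"

definition theta :: "('n::{finite,linorder} \<times> 'n) set \<Rightarrow> 'n set \<Rightarrow> nat" where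
  "theta D S = (\<Sum>j\<in>UNIV. theta_col D j S)"

definition schubitope :: "('n::{finite,linorder} \<times> 'n) set \<Rightarrow> (real ^ 'n::{finite,linorder}) set" where
  "schubitope D = {x. (\<Sum>i\<in>UNIV. x $ i) = real (card D) \<and>
                      (\<forall>S. S \<subset> UNIV \<longrightarrow> (\<Sum>i\<in>S. x $ i) \<le> real (theta D S))}"

definition fill_step :: "('n::{finite,linorder} \<times> 'n) set \<Rightarrow> 'n \<Rightarrow> ('n \<Rightarrow> 'n option) \<Rightarrow> 'n \<Rightarrow> ('n \<Rightarrow> 'n option)" where
  "fill_step D j f v =
     (let C = {i. (i,j) \<in> D \<and> f i = None \<and> v \<le> i}
      in if C = {} then f else f(Min C := Some v))"

(* filling of column j by w = w_1 ... w_n (w_k = w k, positions k in increasing order);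
   result maps row i to the entry of box (i,j), None if empty *)
definition filling_col :: "('n::{finite,linorder} \<times> 'n) set \<Rightarrow> ('n \<Rightarrow> 'n) \<Rightarrow> 'n \<Rightarrow> ('n \<Rightarrow> 'n option)" where
  "filling_col D w j = fold (\<lambda>k f. fill_step D j f (w k)) (sorted_list_of_set (UNIV :: 'n set)) (\<lambda>_. None)"

definition xw :: "('n::{finite,linorder} \<times> 'n) set \<Rightarrow> ('n \<Rightarrow> 'n) \<Rightarrow> real ^ ('n::{finite,linorder})" where
  "xw D w = (\<chi> k. real (card {(i,j). filling_col D w j i = Some k}))"

end

theory Submission
  imports Defs
begin

text \<open>
  Reading a column top to bottom, \<open>\<theta>\<^sup>j\<^sub>D(S)\<close> equals the least value, over all
  cuts of the column, of the number of rows of \<open>S\<close> above the cut plus the number of boxes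
  of \<open>D\<close> below it. In the filling of a column by \<open>w\<close>, an entry with value \<open>v\<close> sits in a
  box of \<open>D\<close> at a row \<open>\<ge> v\<close>, so the entries lying in \<open>S\<close> never exceed this bound; and
  the values \<open>w\<^sub>1, \<dots>, w\<^sub>k\<close>, placed greedily, attain it. Hence \<open>x(w)\<close> lies in the
  Schubitope and makes all inequalities for the sets \<open>{w\<^sub>1, \<dots>, w\<^sub>k}\<close> tight, which
  forces it to be a vertex. Conversely, for a linear functional \<open>c\<close> the permutation listing
  the rows by decreasing \<open>c\<close> maximises \<open>c\<close> on the Schubitope (Abel summation), so the
  Schubitope is the convex hull of the points \<open>x(w)\<close>.
\<close>

section \<open>Minimal cuts of a list\<close>

(* The minimum, over all cut points m, of the P-elements among the first m entries plus the
   Q-elements among the remaining ones. *)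
fun min_split :: "('a \<Rightarrow> bool) \<Rightarrow> ('a \<Rightarrow> bool) \<Rightarrow> 'a list \<Rightarrow> nat" where
  "min_split P Q [] = 0"
| "min_split P Q (x # xs) =
     min (length (filter Q (x # xs))) ((if P x then 1 else 0) + min_split P Q xs)"

lemma min_split_le_filter: "min_split P Q xs \<le> length (filter Q xs)"
  by (induction xs) auto

lemma min_split_le:
  "min_split P Q xs \<le> length (filter P (take m xs)) + length (filter Q (drop m xs))"
proof (induction xs arbitrary: m)
  case (Cons x xs)
  then show ?case by (cases m) (auto simp: min_le_iff_disj)
qed simp

lemma min_split_attained:
  "\<exists>m. min_split P Q xs = length (filter P (take m xs)) + length (filter Q (drop m xs))"
proof (induction xs)
  case (Cons x xs)
  then obtain m where
    "min_split P Q xs = length (filter P (take m xs)) + length (filter Q (drop m xs))" by blast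
  then show ?case
    by (cases "length (filter Q (x # xs)) \<le> (if P x then 1 else 0) + min_split P Q xs")
      (auto intro: exI[of _ 0] exI[of _ "Suc m"])
qed simp

lemma min_split_True: "min_split (\<lambda>_. True) Q xs = length (filter Q xs)"
  by (induction xs) auto

lemma sorted_wrt_less_take_down_closed:
  fixes xs :: "'a::linorder list"
  assumes "sorted_wrt (<) xs" "i \<in> set (take m xs)" "v \<in> set xs" "v \<le> i"
  shows "v \<in> set (take m xs)"
  using assms
proof (induction xs arbitrary: m)
  case (Cons x xs)
  then show ?case by (cases m) force+
qed simp

lemma sorted_wrt_less_take_atMost:
  fixes xs :: "'a::linorder list"
  assumes "sorted_wrt (<) xs"
  shows "\<exists>m. set (take m xs) = {i \<in> set xs. i \<le> e}"
  using assms
proof (induction xs)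
  case (Cons x xs)
  show ?case
  proof (cases "x \<le> e")
    case True
    obtain m where "set (take m xs) = {i \<in> set xs. i \<le> e}"
      using Cons by auto
    then show ?thesis
      using True by (intro exI[of _ "Suc m"]) auto
  next
    case False
    then have "{i \<in> set (x # xs). i \<le> e} = {}"
      using Cons.prems by (auto dest: order.strict_trans2)
    then show ?thesis by (intro exI[of _ 0]) simp
  qed
qed simp

section \<open>The column statistic as a minimal cut\<close>

lemma matched_word_min_split:
  "matched k (concat (map (sym_of D j S) rs))
     + length (filter (\<lambda>c. c = PStar) (concat (map (sym_of D j S) rs)))
    = min (length (filter (\<lambda>i. (i,j) \<in> D) rs)) (k + min_split (\<lambda>i. i \<in> S) (\<lambda>i. (i,j) \<in> D) rs)"
proof (induction rs arbitrary: k)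
  case (Cons i rs)
  show ?case
    using Cons.IH[of "Suc k"] Cons.IH[of k] Cons.IH[of "k - 1"]
      min_split_le_filter[of "\<lambda>i. i \<in> S" "\<lambda>i. (i,j) \<in> D" rs]
    by (cases "(i,j) \<in> D"; cases "i \<in> S"; cases k) (auto simp: sym_of_def min_def)
qed simp

abbreviation rows :: "'n::{finite,linorder} list" where
  "rows \<equiv> sorted_list_of_set UNIV"

lemma theta_col_min_split:
  "theta_col D j S = min_split (\<lambda>i. i \<in> S) (\<lambda>i. (i,j) \<in> D) rows"
  using matched_word_min_split[of 0 D j S rows]
    min_split_le_filter[of "\<lambda>i. i \<in> S" "\<lambda>i. (i,j) \<in> D" rows]
  by (simp add: theta_col_def word_col_def)

lemma length_filter_take_rows:
  "length (filter P (take m rows)) = card {i \<in> set (take m rows). P i}"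
  by (simp add: distinct_length_filter Int_def conj_commute)

lemma length_filter_drop_rows:
  "length (filter P (drop m rows)) = card {i. i \<notin> set (take m rows) \<and> P i}"
proof -
  have "set (take m rows) \<union> set (drop m rows) = UNIV"
    unfolding set_append[symmetric] by simp
  moreover have "set (take m rows) \<inter> set (drop m rows) = {}"
    by (simp add: set_take_disj_set_drop_if_distinct)
  ultimately have "{i. P i} \<inter> set (drop m rows) = {i. i \<notin> set (take m rows) \<and> P i}"
    by blast
  then show ?thesis
    by (simp add: distinct_length_filter)
qed

lemma card_pairs_eq_sum:
  "card {(i, j). P i j} = (\<Sum>j\<in>UNIV. card {i::'a::finite. P i (j::'b::finite)})"
proof -
  have "{(i, j). P i j} = (\<lambda>(j, i). (i, j)) ` (SIGMA j:UNIV. {i. P i j})"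
    by auto
  moreover have "inj_on (\<lambda>(j, i). (i, j)) (SIGMA j:UNIV. {i::'a. P i (j::'b)})"
    by (auto intro!: inj_onI)
  ultimately show ?thesis
    by (simp add: card_image)
qed

lemma theta_UNIV: "theta D UNIV = card D"
proof -
  have "theta D UNIV = (\<Sum>j\<in>UNIV. card {i. (i,j) \<in> D})"
    by (simp add: theta_def theta_col_min_split min_split_True distinct_length_filter)
  also have "\<dots> = card D"
    using card_pairs_eq_sum[where P = "\<lambda>i j. (i,j) \<in> D"] by simp
  finally show ?thesis .
qed

section \<open>Filling a column\<close>

definition partial_filling ::
  "('n::linorder \<times> 'n) set \<Rightarrow> 'n \<Rightarrow> 'n set \<Rightarrow> ('n \<Rightarrow> 'n option) \<Rightarrow> bool" where
  "partial_filling D j V f \<longleftrightarrow>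
     (\<forall>i v. f i = Some v \<longrightarrow> (i,j) \<in> D \<and> v \<le> i \<and> v \<in> V) \<and>
     (\<forall>i i' v. f i = Some v \<longrightarrow> f i' = Some v \<longrightarrow> i = i') \<and>
     (\<forall>v\<in>V. \<forall>i. (i,j) \<in> D \<longrightarrow> v \<le> i \<longrightarrow> f i = None \<longrightarrow> (\<exists>r\<le>i. f r = Some v))"

lemma partial_filling_entry:
  "partial_filling D j V f \<Longrightarrow> f i = Some v \<Longrightarrow> (i,j) \<in> D \<and> v \<le> i \<and> v \<in> V"
  unfolding partial_filling_def by blast

lemma partial_filling_inj:
  "partial_filling D j V f \<Longrightarrow> f i = Some v \<Longrightarrow> f i' = Some v \<Longrightarrow> i = i'"
  unfolding partial_filling_def by blast

lemma partial_filling_placed_above: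
  "partial_filling D j V f \<Longrightarrow> v \<in> V \<Longrightarrow> (i,j) \<in> D \<Longrightarrow> v \<le> i \<Longrightarrow> f i = None
   \<Longrightarrow> \<exists>r\<le>i. f r = Some v"
  unfolding partial_filling_def by blast

lemma partial_filling_inj_on_entries:
  "partial_filling D j V f \<Longrightarrow> inj_on (\<lambda>i. the (f i)) {i. f i \<noteq> None}"
  by (rule inj_onI) (auto dest: partial_filling_inj)

lemma partial_filling_empty: "partial_filling D j {} (\<lambda>_. None)"
  by (simp add: partial_filling_def)

lemma partial_filling_fill_step:
  assumes f: "partial_filling D j V f" and u: "u \<notin> V"
  shows "partial_filling D j (insert u V) (fill_step D j f u)"
proof -
  define C where "C = {i. (i,j) \<in> D \<and> f i = None \<and> u \<le> i}"
  show ?thesis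
  proof (cases "C = {}")
    case True
    then show ?thesis
      using f by (auto simp: fill_step_def C_def partial_filling_def)
  next
    case False
    define m where "m = Min C"
    have "m \<in> C" and m_least: "\<And>i. i \<in> C \<Longrightarrow> m \<le> i"
      using False unfolding m_def by (simp_all add: Min_in)
    moreover have "fill_step D j f u = f(m := Some u)"
      using False unfolding fill_step_def Let_def C_def[symmetric] m_def by simp
    ultimately show ?thesis
      using f u unfolding partial_filling_def C_def
      by (smt (verit) fun_upd_apply insert_iff option.inject mem_Collect_eq)
  qed
qed

definition fill_steps ::
  "('n::{finite,linorder} \<times> 'n) set \<Rightarrow> 'n \<Rightarrow> 'n list \<Rightarrow> ('n \<Rightarrow> 'n option) \<Rightarrow> ('n \<Rightarrow> 'n option)"
where
  "fill_steps D j vs f = fold (\<lambda>v f. fill_step D j f v) vs f"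

lemma fill_steps_Nil [simp]: "fill_steps D j [] f = f"
  and fill_steps_Cons [simp]: "fill_steps D j (v # vs) f = fill_steps D j vs (fill_step D j f v)"
  and fill_steps_append: "fill_steps D j (vs @ us) f = fill_steps D j us (fill_steps D j vs f)"
  by (simp_all add: fill_steps_def)

lemma filling_col_eq_fill_steps: "filling_col D w j = fill_steps D j (map w rows) (\<lambda>_. None)"
  by (simp add: filling_col_def fill_steps_def fold_map o_def)

lemma fill_step_keeps:
  assumes "f i = Some v"
  shows "fill_step D j f u i = Some v"
proof -
  let ?C = "{i. (i,j) \<in> D \<and> f i = None \<and> u \<le> i}"
  show ?thesis
  proof (cases "?C = {}")
    case False
    then have "Min ?C \<noteq> i"
      using Min_in[of ?C] assms by auto
    then show ?thesis
      using assms by (simp add: fill_step_def Let_def)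
  qed (simp add: fill_step_def assms)
qed

lemma fill_steps_keeps: "f i = Some v \<Longrightarrow> fill_steps D j us f i = Some v"
  by (induction us arbitrary: f) (auto simp: fill_step_keeps)

lemma fill_steps_new_entry: "fill_steps D j us f i = Some v \<Longrightarrow> f i = Some v \<or> v \<in> set us"
  by (induction us arbitrary: f) (fastforce simp: fill_step_def Let_def split: if_splits)+

lemma partial_filling_fill_steps:
  "partial_filling D j V f \<Longrightarrow> distinct us \<Longrightarrow> set us \<inter> V = {}
   \<Longrightarrow> partial_filling D j (V \<union> set us) (fill_steps D j us f)"
proof (induction us arbitrary: V f)
  case (Cons u us)
  then have "partial_filling D j (insert u V) (fill_step D j f u)"
    by (intro partial_filling_fill_step) auto
  with Cons.IH[OF this] Cons.prems show ?case by simp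
qed simp

lemma fill_steps_entries_in:
  assumes f: "partial_filling D j V f" and vs: "set vs \<inter> V = {}"
  shows "{i. \<exists>v\<in>V. fill_steps D j vs f i = Some v} = {i. f i \<noteq> None}"
proof (intro equalityI subsetI)
  fix i assume "i \<in> {i. \<exists>v\<in>V. fill_steps D j vs f i = Some v}"
  then obtain v where "v \<in> V" "fill_steps D j vs f i = Some v" by blast
  then show "i \<in> {i. f i \<noteq> None}"
    using fill_steps_new_entry[of D j vs f i v] vs by auto
next
  fix i assume "i \<in> {i. f i \<noteq> None}"
  then obtain v where "f i = Some v" by blast
  then show "i \<in> {i. \<exists>v\<in>V. fill_steps D j vs f i = Some v}"
    using partial_filling_entry[OF f] fill_steps_keeps by blast
qed

lemma card_filled_le_split:
  fixes D :: "('n::{finite,linorder} \<times> 'n) set"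
  assumes f: "partial_filling D j V f"
  shows "card {i. \<exists>v\<in>S. f i = Some v}
    \<le> card {i \<in> set (take m rows). i \<in> S} + card {i. i \<notin> set (take m rows) \<and> (i,j) \<in> D}"
proof -
  let ?T = "set (take m (rows :: 'n list))"
  let ?A = "{i. \<exists>v\<in>S. f i = Some v}"
  have "(\<lambda>i. the (f i)) ` (?A \<inter> ?T) \<subseteq> {i \<in> ?T. i \<in> S}"
  proof
    fix v assume "v \<in> (\<lambda>i. the (f i)) ` (?A \<inter> ?T)"
    then obtain i where i: "i \<in> ?T" "v \<in> S" "f i = Some v" by auto
    then have "v \<le> i"
      using partial_filling_entry[OF f] by blast
    with i show "v \<in> {i \<in> ?T. i \<in> S}"
      using sorted_wrt_less_take_down_closed[of rows] by auto
  qed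
  then have "card (?A \<inter> ?T) \<le> card {i \<in> ?T. i \<in> S}"
    using inj_on_subset[OF partial_filling_inj_on_entries[OF f], of "?A \<inter> ?T"]
    by (intro card_inj_on_le) auto
  moreover have "card (?A - ?T) \<le> card {i. i \<notin> ?T \<and> (i,j) \<in> D}"
    using partial_filling_entry[OF f] by (intro card_mono) auto
  moreover have "card ?A \<le> card (?A \<inter> ?T) + card (?A - ?T)"
    using card_Un_le[of "?A \<inter> ?T" "?A - ?T"] by (simp add: Int_Diff_Un)
  ultimately show ?thesis by linarith
qed

lemma card_filled_above_empty_box:
  assumes f: "partial_filling D j V f" and e: "(e,j) \<in> D" "f e = None"
  shows "card {i. f i \<noteq> None \<and> i \<le> e} = card {v \<in> V. v \<le> e}"
proof -
  have inj: "inj_on (\<lambda>i. the (f i)) {i. f i \<noteq> None \<and> i \<le> e}"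
    using partial_filling_inj_on_entries[OF f] by (rule inj_on_subset) blast
  have "(\<lambda>i. the (f i)) ` {i. f i \<noteq> None \<and> i \<le> e} = {v \<in> V. v \<le> e}"
  proof (intro equalityI subsetI)
    fix v assume "v \<in> (\<lambda>i. the (f i)) ` {i. f i \<noteq> None \<and> i \<le> e}"
    then obtain i where "f i = Some v" "i \<le> e" by auto
    then show "v \<in> {v \<in> V. v \<le> e}"
      using partial_filling_entry[OF f, of i v] by auto
  next
    fix v assume "v \<in> {v \<in> V. v \<le> e}"
    then obtain r where "r \<le> e" "f r = Some v"
      using partial_filling_placed_above[OF f _ e(1) _ e(2)] by blast
    then show "v \<in> (\<lambda>i. the (f i)) ` {i. f i \<noteq> None \<and> i \<le> e}"
      by (auto intro!: image_eqI[of _ _ r])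
  qed
  then show ?thesis
    using card_image[OF inj] by simp
qed

lemma card_filled_eq_split:
  fixes D :: "('n::{finite,linorder} \<times> 'n) set"
  assumes f: "partial_filling D j V f"
  shows "\<exists>m. card {i. f i \<noteq> None}
    = card {i \<in> set (take m rows). i \<in> V} + card {i. i \<notin> set (take m rows) \<and> (i,j) \<in> D}"
proof (cases "\<exists>i. (i,j) \<in> D \<and> f i = None")
  case False
  then have "{i. f i \<noteq> None} = {i. (i,j) \<in> D}"
    using partial_filling_entry[OF f] by fastforce
  then show ?thesis by (intro exI[of _ 0]) simp
next
  case True
  \<comment> \<open>Cut just below the lowest empty box \<open>e\<close> of \<open>D\<close>: every value \<open>\<le> e\<close> has been placed
     at a row \<open>\<le> e\<close>, and every box of \<open>D\<close> below \<open>e\<close> is filled.\<close>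
  define e where "e = Max {i. (i,j) \<in> D \<and> f i = None}"
  have e: "(e,j) \<in> D" "f e = None" and e_max: "\<And>i. (i,j) \<in> D \<Longrightarrow> f i = None \<Longrightarrow> i \<le> e"
    using True Max_in[of "{i. (i,j) \<in> D \<and> f i = None}"] by (auto simp: e_def)
  obtain m where m: "set (take m rows) = {i. i \<le> e}"
    using sorted_wrt_less_take_atMost[of rows e] by auto
  have "f i \<noteq> None \<longleftrightarrow> (i,j) \<in> D" if "\<not> i \<le> e" for i
    using partial_filling_entry[OF f, of i] e_max[of i] that by auto
  then have below: "{i. f i \<noteq> None \<and> \<not> i \<le> e} = {i. \<not> i \<le> e \<and> (i,j) \<in> D}"
    by blast
  have "{i. f i \<noteq> None} = {i. f i \<noteq> None \<and> i \<le> e} \<union> {i. f i \<noteq> None \<and> \<not> i \<le> e}"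
    by blast
  then have "card {i. f i \<noteq> None}
      = card {i. f i \<noteq> None \<and> i \<le> e} + card {i. f i \<noteq> None \<and> \<not> i \<le> e}"
    by (metis (no_types, lifting) card_Un_disjoint disjoint_iff finite mem_Collect_eq)
  then show ?thesis
    using m below card_filled_above_empty_box[OF f e] by (intro exI[of _ m]) (simp add: conj_commute)
qed

lemma card_filled_in_le_theta_col:
  assumes "partial_filling D j V f"
  shows "card {i. \<exists>v\<in>S. f i = Some v} \<le> theta_col D j S"
proof -
  obtain m where "theta_col D j S
      = length (filter (\<lambda>i. i \<in> S) (take m rows)) + length (filter (\<lambda>i. (i,j) \<in> D) (drop m rows))"
    using min_split_attained theta_col_min_split by metis
  then show ?thesis
    using card_filled_le_split[OF assms, of S m]
    by (simp add: length_filter_take_rows length_filter_drop_rows)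
qed

lemma card_filled_eq_theta_col:
  assumes f: "partial_filling D j V f"
  shows "card {i. f i \<noteq> None} = theta_col D j V"
proof (rule antisym)
  have "{i. f i \<noteq> None} = {i. \<exists>v\<in>V. f i = Some v}"
    using partial_filling_entry[OF f] by auto
  then show "card {i. f i \<noteq> None} \<le> theta_col D j V"
    using card_filled_in_le_theta_col[OF f, of V] by simp
  obtain m where "card {i. f i \<noteq> None}
      = card {i \<in> set (take m rows). i \<in> V} + card {i. i \<notin> set (take m rows) \<and> (i,j) \<in> D}"
    using card_filled_eq_split[OF f] by blast
  then show "theta_col D j V \<le> card {i. f i \<noteq> None}"
    using min_split_le[of "\<lambda>i. i \<in> V" "\<lambda>i. (i,j) \<in> D" rows m]
    by (simp add: theta_col_min_split length_filter_take_rows length_filter_drop_rows)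
qed

section \<open>The points x(w)\<close>

lemma sum_card_Some_eq_card:
  fixes F :: "'a::finite \<Rightarrow> 'b option"
  assumes "finite S"
  shows "(\<Sum>k\<in>S. card {i. F i = Some k}) = card {i. \<exists>v\<in>S. F i = Some v}"
proof -
  have "card (\<Union>k\<in>S. {i. F i = Some k}) = (\<Sum>k\<in>S. card {i. F i = Some k})"
    using assms by (intro card_UN_disjoint) auto
  moreover have "(\<Union>k\<in>S. {i. F i = Some k}) = {i. \<exists>v\<in>S. F i = Some v}"
    by auto
  ultimately show ?thesis
    by simp
qed

lemma sum_xw:
  "(\<Sum>k\<in>S. xw D w $ k) = real (\<Sum>j\<in>UNIV. card {i. \<exists>v\<in>S. filling_col D w j i = Some v})"
proof -
  have "(\<Sum>k\<in>S. xw D w $ k) = real (\<Sum>k\<in>S. \<Sum>j\<in>UNIV. card {i. filling_col D w j i = Some k})"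
    by (simp add: xw_def card_pairs_eq_sum[where P = "\<lambda>i j. filling_col D w j i = Some _"])
  also have "\<dots> = real (\<Sum>j\<in>UNIV. \<Sum>k\<in>S. card {i. filling_col D w j i = Some k})"
    by (simp only: sum.swap[where A = S])
  finally show ?thesis
    by (simp add: sum_card_Some_eq_card)
qed

lemma schubitope_le_theta: "y \<in> schubitope D \<Longrightarrow> (\<Sum>i\<in>T. y $ i) \<le> real (theta D T)"
  by (cases "T = UNIV") (auto simp: schubitope_def theta_UNIV)

lemma distinct_map_permutes_rows: "w permutes UNIV \<Longrightarrow> distinct (map w rows)"
  by (simp add: distinct_map permutes_inj_on)

lemma set_map_permutes_rows: "w permutes UNIV \<Longrightarrow> set (map w rows) = UNIV"
  by (simp add: permutes_image)

lemma ex_permutes_map_rows: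
  fixes vs :: "'n::{finite,linorder} list"
  assumes vs: "distinct vs" "set vs = UNIV"
  shows "\<exists>w. w permutes UNIV \<and> map w rows = vs"
proof -
  let ?rs = "rows :: 'n list"
  let ?idx = "inv_into {..<length ?rs} ((!) ?rs)"
  have len: "length vs = length ?rs"
    using vs by (simp add: distinct_card[symmetric])
  have rs: "bij_betw ((!) ?rs) {..<length ?rs} UNIV"
    by (intro bij_betw_nth) simp_all
  have "bij_betw ((!) vs) {..<length ?rs} UNIV"
    using vs len by (intro bij_betw_nth) simp_all
  with rs have "bij ((!) vs \<circ> ?idx)"
    by (blast intro: bij_betw_trans bij_betw_inv_into)
  moreover have "map ((!) vs \<circ> ?idx) ?rs = vs"
    using rs len by (intro nth_equalityI) (simp_all add: bij_betw_inv_into_left)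
  ultimately show ?thesis
    by (blast intro: bij_imp_permutes)
qed

lemma partial_filling_filling_col:
  assumes "w permutes UNIV"
  shows "partial_filling D j UNIV (filling_col D w j)"
  using partial_filling_fill_steps[OF partial_filling_empty distinct_map_permutes_rows[OF assms]]
  by (simp add: filling_col_eq_fill_steps permutes_surj[OF assms])

lemma xw_in_schubitope:
  assumes w: "w permutes UNIV"
  shows "xw D w \<in> schubitope D"
proof -
  have "(\<Sum>k\<in>S. xw D w $ k) \<le> real (theta D S)" for S
    unfolding sum_xw theta_def of_nat_le_iff
    by (intro sum_mono card_filled_in_le_theta_col[OF partial_filling_filling_col[OF w]])
  moreover have "(\<Sum>k\<in>UNIV. xw D w $ k) = real (card D)"
    using card_filled_eq_theta_col[OF partial_filling_filling_col[OF w]]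
    by (simp add: sum_xw theta_UNIV flip: theta_def)
  ultimately show ?thesis
    by (simp add: schubitope_def)
qed

lemma sum_xw_prefix:
  assumes w: "w permutes UNIV"
  shows "(\<Sum>i\<in>set (take k (map w rows)). xw D w $ i) = real (theta D (set (take k (map w rows))))"
    (is "_ = real (theta D ?T)")
proof -
  have "card {i. \<exists>v\<in>?T. filling_col D w j i = Some v} = theta_col D j ?T" for j
  proof -
    let ?f = "fill_steps D j (take k (map w rows)) (\<lambda>_. None)"
    have "distinct (take k (map w rows) @ drop k (map w rows))"
      using distinct_map_permutes_rows[OF w] by simp
    then have f: "partial_filling D j ?T ?f"
      using partial_filling_fill_steps[OF partial_filling_empty, of "take k (map w rows)"]
      by simp
    have "filling_col D w j = fill_steps D j (drop k (map w rows)) ?f"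
      by (simp add: filling_col_eq_fill_steps flip: fill_steps_append)
    moreover have "set (drop k (map w rows)) \<inter> ?T = {}"
      using set_take_disj_set_drop_if_distinct[OF distinct_map_permutes_rows[OF w], of k k]
      by blast
    ultimately show ?thesis
      using fill_steps_entries_in[OF f] card_filled_eq_theta_col[OF f] by simp
  qed
  then show ?thesis
    by (simp add: sum_xw theta_def)
qed

section \<open>Prefix sums of vectors\<close>

lemma convex_comb_eq_upper_bound:
  fixes a b t u :: real
  assumes "a \<le> t" "b \<le> t" "0 < u" "u < 1" "(1 - u) * a + u * b = t"
  shows "a = t \<and> b = t"
proof -
  have "(1 - u) * (t - a) + u * (t - b) = 0"
    using assms(5) by (simp add: algebra_simps)
  moreover have "0 \<le> (1 - u) * (t - a)" "0 \<le> u * (t - b)"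
    using assms(1-4) by simp_all
  ultimately have "(1 - u) * (t - a) = 0" "u * (t - b) = 0"
    by linarith+
  then show ?thesis
    using assms(3,4) by simp
qed

lemma vec_eq_if_prefix_sums_eq:
  fixes y z :: "'a::ab_group_add ^ 'n"
  assumes vs: "distinct vs" "set vs = UNIV"
    and eq: "\<And>k. (\<Sum>i\<in>set (take k vs). y $ i) = (\<Sum>i\<in>set (take k vs). z $ i)"
  shows "y = z"
proof (rule vec_eq_iff[THEN iffD2], rule allI)
  fix i
  obtain p where p: "p < length vs" "vs ! p = i"
    using vs(2) by (metis UNIV_I in_set_conv_nth)
  have "take (Suc p) vs = take p vs @ [i]"
    using p by (simp add: take_Suc_conv_app_nth)
  then have "set (take (Suc p) vs) = insert i (set (take p vs))" "i \<notin> set (take p vs)"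
    using distinct_take[OF vs(1), of "Suc p"] by simp_all
  then show "y $ i = z $ i"
    using eq[of p] eq[of "Suc p"] by simp
qed

lemma extreme_point_if_prefix_sums_tight:
  fixes x :: "real ^ 'n"
  assumes x: "x \<in> P" and vs: "distinct vs" "set vs = UNIV"
    and le: "\<And>y T. y \<in> P \<Longrightarrow> (\<Sum>i\<in>T. y $ i) \<le> b T"
    and tight: "\<And>k. (\<Sum>i\<in>set (take k vs). x $ i) = b (set (take k vs))"
  shows "x extreme_point_of P"
  unfolding extreme_point_of_def
proof (intro conjI ballI x notI)
  fix y z assume y: "y \<in> P" and z: "z \<in> P" and "x \<in> open_segment y z"
  then obtain u where yz: "y \<noteq> z" "0 < u" "u < 1" and x_eq: "x = (1 - u) *\<^sub>R y + u *\<^sub>R z"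
    by (auto simp: in_segment)
  have "(\<Sum>i\<in>T. y $ i) = b T \<and> (\<Sum>i\<in>T. z $ i) = b T" if "T = set (take k vs)" for T k
  proof (rule convex_comb_eq_upper_bound[OF le[OF y] le[OF z] yz(2,3)])
    show "(1 - u) * (\<Sum>i\<in>T. y $ i) + u * (\<Sum>i\<in>T. z $ i) = b T"
      using tight[of k] that by (simp add: x_eq sum.distrib sum_distrib_left)
  qed
  then have "y = x" "z = x"
    by (simp_all add: tight vec_eq_if_prefix_sums_eq[OF vs])
  with yz(1) show False by simp
qed

lemma sum_set_take_nth:
  assumes "distinct xs" "k \<le> length xs"
  shows "(\<Sum>i\<in>set (take k xs). g i) = (\<Sum>p<k. g (xs ! p))"
  using assms by (simp add: sum.distinct_set_conv_list sum_list_sum_nth atLeast0LessThan min_def)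

lemma abel_summation_nonneg:
  fixes a d :: "nat \<Rightarrow> real"
  assumes a: "\<And>p q. p \<le> q \<Longrightarrow> q < N \<Longrightarrow> a q \<le> a p"
    and d: "\<And>k. k \<le> N \<Longrightarrow> 0 \<le> (\<Sum>p<k. d p)" and total: "(\<Sum>p<N. d p) = 0"
  shows "0 \<le> (\<Sum>p<N. a p * d p)"
proof (cases N)
  case (Suc n)
  have "a k * (\<Sum>p<Suc k. d p) \<le> (\<Sum>p<Suc k. a p * d p)" if "k < N" for k
    using that
  proof (induction k)
    case (Suc k)
    have "0 \<le> (a k - a (Suc k)) * (\<Sum>p<Suc k. d p)"
      using a[of k "Suc k"] d[of "Suc k"] Suc.prems by (intro mult_nonneg_nonneg) auto
    with Suc show ?case by (simp add: algebra_simps)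
  qed simp
  from this[of n] show ?thesis
    using Suc total by simp
qed simp

lemma inner_le_if_prefix_sums_le:
  fixes c x y :: "real ^ 'n"
  assumes vs: "distinct vs" "set vs = UNIV" and c: "sorted (map (\<lambda>i. - c $ i) vs)"
    and le: "\<And>k. (\<Sum>i\<in>set (take k vs). y $ i) \<le> (\<Sum>i\<in>set (take k vs). x $ i)"
    and eq: "(\<Sum>i\<in>UNIV. y $ i) = (\<Sum>i\<in>UNIV. x $ i)"
  shows "inner c y \<le> inner c x"
proof -
  let ?N = "length vs"
  have sum_UNIV: "(\<Sum>i\<in>UNIV. g i) = (\<Sum>p<?N. g (vs ! p))" for g :: "'n \<Rightarrow> real"
    using sum_set_take_nth[OF vs(1), of ?N g] vs(2) by simp
  have "0 \<le> (\<Sum>p<?N. c $ (vs ! p) * (x $ (vs ! p) - y $ (vs ! p)))"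
  proof (rule abel_summation_nonneg)
    show "c $ (vs ! q) \<le> c $ (vs ! p)" if "p \<le> q" "q < ?N" for p q
      using sorted_nth_mono[OF c, of p q] that by simp
    show "0 \<le> (\<Sum>p<k. x $ (vs ! p) - y $ (vs ! p))" if "k \<le> ?N" for k
      using le[of k] sum_set_take_nth[OF vs(1) that, of "($) x"] sum_set_take_nth[OF vs(1) that, of "($) y"]
      by (simp add: sum_subtractf)
    show "(\<Sum>p<?N. x $ (vs ! p) - y $ (vs ! p)) = 0"
      using eq by (simp add: sum_subtractf flip: sum_UNIV)
  qed
  then show ?thesis
    by (simp add: inner_vec_def sum_UNIV algebra_simps sum_subtractf)
qed

lemma subset_convex_hull_if_maximizers:
  fixes P X :: "'a::euclidean_space set"
  assumes "finite X" and max: "\<And>c y. y \<in> P \<Longrightarrow> \<exists>x\<in>X. inner c y \<le> inner c x"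
  shows "P \<subseteq> convex hull X"
proof
  fix y assume y: "y \<in> P"
  show "y \<in> convex hull X"
  proof (rule ccontr)
    assume "y \<notin> convex hull X"
    moreover have "closed (convex hull X)"
      using assms(1) by (simp add: compact_imp_closed finite_imp_compact_convex_hull)
    ultimately obtain a b where "inner a y < b" "\<forall>z\<in>convex hull X. b < inner a z"
      using separating_hyperplane_closed_point[OF convex_convex_hull] by blast
    moreover obtain x where "x \<in> X" "inner (- a) y \<le> inner (- a) x"
      using max[OF y] by blast
    ultimately show False
      using hull_inc[of x X] by fastforce
  qed
qed

section \<open>The vertices of the Schubitope\<close>

lemma convex_schubitope: "convex (schubitope D)"
proof (rule convexI)
  fix x y and u v :: real
  assume x: "x \<in> schubitope D" and y: "y \<in> schubitope D" and uv: "0 \<le> u" "0 \<le> v" "u + v = 1"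
  have lin: "(\<Sum>i\<in>S. (u *\<^sub>R x + v *\<^sub>R y) $ i) = u * (\<Sum>i\<in>S. x $ i) + v * (\<Sum>i\<in>S. y $ i)" for S
    by (simp add: sum.distrib sum_distrib_left)
  have "u * t + v * t = t" for t :: real
    using uv(3) by (metis distrib_right mult_1)
  then have "(\<Sum>i\<in>UNIV. (u *\<^sub>R x + v *\<^sub>R y) $ i) = real (card D)"
    unfolding lin using x y by (simp add: schubitope_def)
  moreover have "(\<Sum>i\<in>S. (u *\<^sub>R x + v *\<^sub>R y) $ i) \<le> real (theta D S)" if "S \<subset> UNIV" for S
    unfolding lin using x y that uv by (intro convex_bound_le) (simp_all add: schubitope_def)
  ultimately show "u *\<^sub>R x + v *\<^sub>R y \<in> schubitope D"
    by (simp add: schubitope_def)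
qed

lemma xw_extreme_point:
  assumes w: "w permutes UNIV"
  shows "xw D w extreme_point_of schubitope D"
  using xw_in_schubitope[OF w] distinct_map_permutes_rows[OF w] set_map_permutes_rows[OF w]
    schubitope_le_theta sum_xw_prefix[OF w]
  by (rule extreme_point_if_prefix_sums_tight)

lemma xw_maximizes_inner:
  "\<exists>w. w permutes UNIV \<and> (\<forall>y\<in>schubitope D. inner c y \<le> inner c (xw D w))"
proof -
  define vs where "vs = sort_key (\<lambda>i. - c $ i) rows"
  have vs: "distinct vs" "set vs = UNIV"
    by (simp_all add: vs_def)
  obtain w where w: "w permutes UNIV" "map w rows = vs"
    using ex_permutes_map_rows[OF vs] by blast
  have "inner c y \<le> inner c (xw D w)" if y: "y \<in> schubitope D" for y
  proof (rule inner_le_if_prefix_sums_le[OF vs])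
    show "sorted (map (\<lambda>i. - c $ i) vs)"
      by (simp add: vs_def)
    show "(\<Sum>i\<in>set (take k vs). y $ i) \<le> (\<Sum>i\<in>set (take k vs). xw D w $ i)" for k
      using schubitope_le_theta[OF y] sum_xw_prefix[OF w(1), where k = k] w(2) by simp
    show "(\<Sum>i\<in>UNIV. y $ i) = (\<Sum>i\<in>UNIV. xw D w $ i)"
      using y xw_in_schubitope[OF w(1)] by (simp add: schubitope_def)
  qed
  with w(1) show ?thesis by blast
qed

theorem theorem1p1:
  fixes D :: "('n::{finite,linorder} \<times> 'n) set"
  shows "{x. x extreme_point_of schubitope D} = {xw D w | w. w permutes (UNIV :: 'n set)}"
proof -
  let ?X = "{xw D w | w. w permutes (UNIV :: 'n set)}"
  have "finite ?X"
    using finite_permutations[of "UNIV :: 'n set"] by (simp add: setcompr_eq_image)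
  then have "schubitope D \<subseteq> convex hull ?X"
    by (rule subset_convex_hull_if_maximizers) (use xw_maximizes_inner in blast)
  moreover have "convex hull ?X \<subseteq> schubitope D"
    by (intro hull_minimal convex_schubitope) (use xw_in_schubitope in blast)
  ultimately have "schubitope D = convex hull ?X"
    by blast
  then have "{x. x extreme_point_of schubitope D} \<subseteq> ?X"
    by (auto dest: extreme_point_of_convex_hull)
  moreover have "?X \<subseteq> {x. x extreme_point_of schubitope D}"
    using xw_extreme_point by blast
  ultimately show ?thesis
    by blast
qed

end
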